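(* Let $G$ be a graph with bandwidth $\mathrm{bw}(G)=b$, and let $H$ be a two-terminal edge gadget on $t\ge 2$ vertices. Let $G_H$ be the graph obtained from $G$ by replacing every edge of $G$ by $H$. Then \[ \mathrm{bw}(G_H)\le (b+1)\bigl(1+(t-2)b\bigr). \]
   Context: Graphs are finite and simple. For a graph $G$ on $n$ vertices, $\mathrm{bw}(G)=\min_{\sigma}\max_{uv\in E(G)}|\sigma(u)-\sigma(v)|$, where the minimum ranges over all bijections $\sigma:V(G)\to[n]$. A two-terminal edge gadget is a graph $H$ with two distinguished distinct attachment vertices $\alpha,\beta$. Replacing an edge $uv$ of a graph by $H$ means deleting $uv$, adding a fresh copy $H_{uv}$ of $H$ (disjoint from everything else), and identifying its two attachment vertices with $u$ and $v$ (in either order); replacing every edge does this simultaneously for all edges with independent fresh copies. *)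

theory Defs
  imports Main
begin

definition simple_graph :: "'a set \<Rightarrow> 'a set set \<Rightarrow> bool" where
  "simple_graph V E \<longleftrightarrow> finite V \<and>
     (\<forall>e\<in>E. \<exists>u v. u \<noteq> v \<and> u \<in> V \<and> v \<in> V \<and> e = {u, v})"

definition layout_width :: "('a \<Rightarrow> nat) \<Rightarrow> 'a set set \<Rightarrow> nat" where
  "layout_width \<sigma> E = Max (insert 0 {nat \<bar>int (\<sigma> u) - int (\<sigma> v)\<bar> | u v. {u, v} \<in> E})"

definition bandwidth :: "'a set \<Rightarrow> 'a set set \<Rightarrow> nat" where
  "bandwidth V E = Min {layout_width \<sigma> E | \<sigma>. bij_betw \<sigma> V {1..card V}}"

text \<open>Replacing every edge e of G=(V,E) by a fresh copy of the gadget H=(W,F) with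
  attachment vertices al, be. The orientation ori e = (u,v) says that al is identified
  with u and be with v.\<close>
definition gadget_map ::
  "('a set \<Rightarrow> 'a \<times> 'a) \<Rightarrow> 'b \<Rightarrow> 'b \<Rightarrow> 'a set \<Rightarrow> 'b \<Rightarrow> 'a + ('a set \<times> 'b)" where
  "gadget_map ori al be e x =
     (if x = al then Inl (fst (ori e)) else if x = be then Inl (snd (ori e)) else Inr (e, x))"

definition replaced_vertices ::
  "'a set \<Rightarrow> 'a set set \<Rightarrow> 'b set \<Rightarrow> 'b \<Rightarrow> 'b \<Rightarrow> ('a + ('a set \<times> 'b)) set" where
  "replaced_vertices V E W al be = Inl ` V \<union> {Inr (e, x) | e x. e \<in> E \<and> x \<in> W - {al, be}}"

definition replaced_edges ::
  "'a set set \<Rightarrow> 'b set set \<Rightarrow> 'b \<Rightarrow> 'b \<Rightarrow> ('a set \<Rightarrow> 'a \<times> 'a)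
     \<Rightarrow> ('a + ('a set \<times> 'b)) set set" where
  "replaced_edges E F al be ori = {gadget_map ori al be e ` f | e f. e \<in> E \<and> f \<in> F}"

end

theory Submission
  imports Defs
begin

text \<open>Stretch an optimal layout \<open>\<sigma>\<close> of \<open>G\<close> by the factor \<open>1 + (t - 2) b\<close>. The gap
  above a vertex then has room for \<open>b\<close> blocks of \<open>t - 2\<close> slots each; the internal
  vertices of the gadget on an edge of length \<open>d \<le> b\<close> fill block \<open>d\<close> of the gap above the
  lower endpoint of the edge. Two edges with the same lower endpoint have different lengths,
  so this placement is injective, and every gadget edge stays within the span of its edge of
  \<open>G\<close>, which is at most \<open>b (1 + (t - 2) b)\<close>. Ranking the placement yields a layout that is no
  wider.\<close>

abbreviation stretch :: "('a \<Rightarrow> nat) \<Rightarrow> 'a \<Rightarrow> 'a \<Rightarrow> nat" where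
  "stretch p u v \<equiv> nat \<bar>int (p u) - int (p v)\<bar>"

lemma nat_abs_diff_le_of_between:
  fixes L H :: nat
  assumes "L \<le> x" "x \<le> H" "L \<le> y" "y \<le> H"
  shows "nat \<bar>int x - int y\<bar> \<le> H - L"
  using assms by (simp add: abs_if nat_le_iff)

lemma mult_add_less_eq_iff:
  fixes q q' r r' m :: nat
  assumes "r < m" "r' < m"
  shows "q * m + r = q' * m + r' \<longleftrightarrow> q = q' \<and> r = r'"
proof
  assume eq: "q * m + r = q' * m + r'"
  have "q = (q * m + r) div m" "q' = (q' * m + r') div m"
    using assms by simp_all
  moreover have "r = (q * m + r) mod m" "r' = (q' * m + r') mod m"
    using assms by simp_all
  ultimately show "q = q' \<and> r = r'"
    unfolding eq by simp
qed simp

lemma simple_graph_edge_subset: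
  assumes "simple_graph V E" "e \<in> E"
  shows "e \<subseteq> V"
proof -
  obtain u v where "u \<in> V" "v \<in> V" "e = {u, v}"
    using assms unfolding simple_graph_def by meson
  then show ?thesis by simp
qed

lemma simple_graph_edge_vertices:
  assumes "simple_graph V E" "{u, v} \<in> E"
  shows "u \<in> V" "v \<in> V"
  using simple_graph_edge_subset[OF assms] by simp_all

lemma simple_graph_edge_distinct:
  assumes "simple_graph V E" "{u, v} \<in> E"
  shows "u \<noteq> v"
  using assms unfolding simple_graph_def doubleton_eq_iff by fastforce

lemma simple_graph_finite_edges:
  assumes "simple_graph V E"
  shows "finite E"
proof (rule finite_subset)
  show "E \<subseteq> Pow V"
    using simple_graph_edge_subset[OF assms] by blast
  show "finite (Pow V)"
    using assms unfolding simple_graph_def by simp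
qed

lemma layout_width_le:
  assumes "\<And>u v. {u, v} \<in> E \<Longrightarrow> stretch \<sigma> u v \<le> K"
  shows "layout_width \<sigma> E \<le> K"
proof -
  have "insert 0 {stretch \<sigma> u v | u v. {u, v} \<in> E} \<subseteq> {..K}"
    using assms by auto
  then show ?thesis
    unfolding layout_width_def by (subst Max_le_iff) (auto dest: finite_subset)
qed

lemma stretch_le_layout_width:
  assumes "simple_graph V E" "{u, v} \<in> E"
  shows "stretch \<sigma> u v \<le> layout_width \<sigma> E"
proof -
  have "{stretch \<sigma> u v | u v. {u, v} \<in> E} \<subseteq> (\<lambda>(u, v). stretch \<sigma> u v) ` (V \<times> V)"
    using simple_graph_edge_vertices[OF assms(1)] by fastforce
  moreover have "finite V"
    using assms(1) unfolding simple_graph_def by simp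
  ultimately have "finite {stretch \<sigma> u v | u v. {u, v} \<in> E}"
    by (meson finite_SigmaI finite_imageI finite_subset)
  then show ?thesis
    unfolding layout_width_def using assms(2) by (intro Max_ge) auto
qed

lemma finite_layout_widths:
  assumes "simple_graph V E"
  shows "finite {layout_width \<sigma> E | \<sigma>. bij_betw \<sigma> V {1..card V}}"
proof (rule finite_subset)
  have "layout_width \<sigma> E \<le> card V" if \<sigma>: "bij_betw \<sigma> V {1..card V}" for \<sigma>
  proof (rule layout_width_le)
    fix u v assume "{u, v} \<in> E"
    then have "\<sigma> u \<in> {1..card V}" "\<sigma> v \<in> {1..card V}"
      using simple_graph_edge_vertices[OF assms] bij_betw_apply[OF \<sigma>] by blast+
    then show "stretch \<sigma> u v \<le> card V" by auto
  qed
  then show "{layout_width \<sigma> E | \<sigma>. bij_betw \<sigma> V {1..card V}} \<subseteq> {..card V}"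
    by auto
qed simp

lemma bandwidth_le_layout_width:
  assumes "simple_graph V E" "bij_betw \<sigma> V {1..card V}"
  shows "bandwidth V E \<le> layout_width \<sigma> E"
  unfolding bandwidth_def using finite_layout_widths[OF assms(1)] assms(2)
  by (intro Min_le) auto

lemma optimal_layout_exists:
  assumes "simple_graph V E"
  obtains \<sigma> where "bij_betw \<sigma> V {1..card V}" "layout_width \<sigma> E = bandwidth V E"
proof -
  have "finite V"
    using assms unfolding simple_graph_def by simp
  then obtain \<sigma> where "bij_betw \<sigma> V {1..card V}"
    using finite_same_card_bij[of V "{1..card V}"] by auto
  then have "{layout_width \<sigma> E | \<sigma>. bij_betw \<sigma> V {1..card V}} \<noteq> {}"
    by blast
  then have "bandwidth V E \<in> {layout_width \<sigma> E | \<sigma>. bij_betw \<sigma> V {1..card V}}"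
    unfolding bandwidth_def using finite_layout_widths[OF assms] by (rule Min_in[rotated])
  then show ?thesis
    using that by auto
qed

definition rank :: "('a \<Rightarrow> nat) \<Rightarrow> 'a set \<Rightarrow> 'a \<Rightarrow> nat" where
  "rank p S x = Suc (card {z \<in> S. p z < p x})"

lemma rank_mono:
  assumes "finite S" "p x \<le> p y"
  shows "rank p S x \<le> rank p S y"
  unfolding rank_def using assms by (auto intro!: card_mono)

lemma rank_strict_mono:
  assumes "finite S" "x \<in> S" "p x < p y"
  shows "rank p S x < rank p S y"
proof -
  have "{z \<in> S. p z < p x} \<subset> {z \<in> S. p z < p y}"
    using assms(2,3) by auto
  then show ?thesis
    unfolding rank_def using assms(1) by (simp add: psubset_card_mono)
qed

lemma rank_diff_le:
  assumes "finite S" "inj_on p S" "p x \<le> p y"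
  shows "rank p S y - rank p S x \<le> p y - p x"
proof -
  let ?below = "\<lambda>k. {z \<in> S. p z < k}"
  let ?between = "{z \<in> S. p x \<le> p z \<and> p z < p y}"
  have "?below (p y) = ?below (p x) \<union> ?between"
    using assms(3) by auto
  moreover have "card (?below (p x) \<union> ?between) = card (?below (p x)) + card ?between"
    using assms(1) by (intro card_Un_disjoint) auto
  ultimately have "card (?below (p y)) = card (?below (p x)) + card ?between"
    by simp
  moreover have "card ?between \<le> card {p x..<p y}"
    using assms(2) by (intro card_inj_on_le[where f = p]) (auto intro: inj_on_subset)
  ultimately show ?thesis
    unfolding rank_def by simp
qed

lemma bij_betw_rank:
  assumes "finite S" "inj_on p S"
  shows "bij_betw (rank p S) S {1..card S}"
proof -
  have "inj_on (rank p S) S"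
  proof (rule inj_onI)
    fix x y assume "x \<in> S" "y \<in> S" "rank p S x = rank p S y"
    then have "p x = p y"
      using rank_strict_mono[OF assms(1)] by (metis nat_neq_iff)
    then show "x = y"
      using assms(2) \<open>x \<in> S\<close> \<open>y \<in> S\<close> by (auto dest: inj_onD)
  qed
  moreover have "rank p S ` S \<subseteq> {1..card S}"
  proof clarify
    fix x assume "x \<in> S"
    then have "{z \<in> S. p z < p x} \<subset> S" by auto
    then show "rank p S x \<in> {1..card S}"
      unfolding rank_def using assms(1) by (simp add: psubset_card_mono Suc_le_eq)
  qed
  ultimately show ?thesis
    unfolding bij_betw_def using assms(1) by (simp add: card_image card_subset_eq)
qed

lemma stretch_rank_le:
  assumes "finite S" "inj_on p S"
  shows "stretch (rank p S) x y \<le> stretch p x y"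
proof (cases "p x \<le> p y")
  case True
  then show ?thesis
    using rank_mono[OF assms(1) True] rank_diff_le[OF assms True] by linarith
next
  case False
  then have "p y \<le> p x" by simp
  then show ?thesis
    using rank_mono[OF assms(1) \<open>p y \<le> p x\<close>] rank_diff_le[OF assms \<open>p y \<le> p x\<close>] by linarith
qed

lemma bandwidth_le_of_placement:
  assumes "simple_graph V E" "inj_on p V" "\<And>u v. {u, v} \<in> E \<Longrightarrow> stretch p u v \<le> K"
  shows "bandwidth V E \<le> K"
proof -
  have "finite V"
    using assms(1) unfolding simple_graph_def by simp
  then have "bandwidth V E \<le> layout_width (rank p V) E"
    using bandwidth_le_layout_width[OF assms(1) bij_betw_rank] assms(2) by blast
  also have "\<dots> \<le> K"
  proof (rule layout_width_le)
    fix u v assume "{u, v} \<in> E"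
    then show "stretch (rank p V) u v \<le> K"
      using stretch_rank_le[OF \<open>finite V\<close> assms(2)] assms(3) le_trans by blast
  qed
  finally show ?thesis .
qed

lemma replaced_vertexE:
  assumes "y \<in> replaced_vertices V E W al be"
  obtains (Inl) v where "y = Inl v" "v \<in> V"
    | (Inr) e x where "y = Inr (e, x)" "e \<in> E" "x \<in> W - {al, be}"
  using assms unfolding replaced_vertices_def by blast

locale edge_replacement =
  fixes V :: "'a set" and E :: "'a set set" and W :: "'b set" and F :: "'b set set"
    and al be :: 'b and ori :: "'a set \<Rightarrow> 'a \<times> 'a"
  assumes graph: "simple_graph V E" and gadget: "simple_graph W F"
    and al: "al \<in> W" and be: "be \<in> W" and al_neq_be: "al \<noteq> be"
    and ori: "\<And>e. e \<in> E \<Longrightarrow> e = {fst (ori e), snd (ori e)}"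
begin

abbreviation "V' \<equiv> replaced_vertices V E W al be"
abbreviation "E' \<equiv> replaced_edges E F al be ori"

lemma ori_endpoints:
  assumes "e \<in> E"
  shows "fst (ori e) \<in> V" "snd (ori e) \<in> V" "fst (ori e) \<noteq> snd (ori e)"
  using simple_graph_edge_vertices[OF graph] simple_graph_edge_distinct[OF graph]
    ori[OF assms] assms by metis+

lemma gadget_map_in_replaced_vertices:
  assumes "e \<in> E" "x \<in> W"
  shows "gadget_map ori al be e x \<in> V'"
  using ori_endpoints[OF assms(1)] assms
  unfolding gadget_map_def replaced_vertices_def by auto

lemma inj_on_gadget_map:
  assumes "e \<in> E"
  shows "inj_on (gadget_map ori al be e) W"
  using ori_endpoints[OF assms] al_neq_be
  unfolding inj_on_def gadget_map_def by auto

lemma simple_graph_replaced: "simple_graph V' E'"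
  unfolding simple_graph_def
proof
  have "{Inr (e, x) | e x. e \<in> E \<and> x \<in> W - {al, be}} \<subseteq> Inr ` (E \<times> W)"
    by auto
  moreover have "finite V" "finite W"
    using graph gadget unfolding simple_graph_def by simp_all
  ultimately show "finite V'"
    unfolding replaced_vertices_def using simple_graph_finite_edges[OF graph]
    by (auto dest: finite_subset)
  show "\<forall>e'\<in>E'. \<exists>a c. a \<noteq> c \<and> a \<in> V' \<and> c \<in> V' \<and> e' = {a, c}"
  proof
    fix e' assume "e' \<in> E'"
    then obtain e f where e: "e \<in> E" and "f \<in> F" and e': "e' = gadget_map ori al be e ` f"
      unfolding replaced_edges_def by blast
    then obtain x y where "x \<noteq> y" "x \<in> W" "y \<in> W" "f = {x, y}"
      using gadget unfolding simple_graph_def by meson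
    then show "\<exists>a c. a \<noteq> c \<and> a \<in> V' \<and> c \<in> V' \<and> e' = {a, c}"
      using e e' inj_on_gadget_map[OF e] gadget_map_in_replaced_vertices[OF e]
      by (auto dest: inj_onD)
  qed
qed

lemma replaced_edgeE:
  assumes "{a, c} \<in> E'"
  obtains e x y where "e \<in> E" "x \<in> W" "y \<in> W"
    "a = gadget_map ori al be e x" "c = gadget_map ori al be e y"
proof -
  obtain e f where "e \<in> E" "f \<in> F" and ac: "{a, c} = gadget_map ori al be e ` f"
    using assms unfolding replaced_edges_def by blast
  moreover have "f \<subseteq> W"
    using simple_graph_edge_subset[OF gadget \<open>f \<in> F\<close>] .
  moreover have "a \<in> gadget_map ori al be e ` f" "c \<in> gadget_map ori al be e ` f"
    unfolding ac[symmetric] by simp_all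
  ultimately show ?thesis
    using that by blast
qed

end

locale replacement_placement = edge_replacement +
  fixes \<sigma> :: "'a \<Rightarrow> nat" and b :: nat and idx :: "'b \<Rightarrow> nat"
  assumes inj_\<sigma>: "inj_on \<sigma> V"
    and \<sigma>_stretch: "\<And>u v. {u, v} \<in> E \<Longrightarrow> stretch \<sigma> u v \<le> b"
    and idx: "bij_betw idx (W - {al, be}) {0..<card W - 2}"
begin

definition scale :: nat where
  "scale = 1 + (card W - 2) * b"

lemma scale_pos: "0 < scale"
  unfolding scale_def by simp

definition slot :: "'a set \<Rightarrow> 'b \<Rightarrow> nat" where
  "slot e x = 1 + (Max (\<sigma> ` e) - Min (\<sigma> ` e) - 1) * (card W - 2) + idx x"

definition place :: "'a + 'a set \<times> 'b \<Rightarrow> nat" where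
  "place y = (case y of Inl v \<Rightarrow> \<sigma> v * scale | Inr (e, x) \<Rightarrow> Min (\<sigma> ` e) * scale + slot e x)"

lemma edge_layout:
  assumes "e \<in> E"
  shows "\<sigma> ` e = {Min (\<sigma> ` e), Max (\<sigma> ` e)}" "Min (\<sigma> ` e) < Max (\<sigma> ` e)"
    "Max (\<sigma> ` e) \<le> Min (\<sigma> ` e) + b"
proof -
  obtain u v where e: "e = {u, v}" and "u \<noteq> v" "u \<in> V" "v \<in> V"
    using ori[OF assms] ori_endpoints[OF assms] by blast
  then have "\<sigma> u \<noteq> \<sigma> v"
    using inj_\<sigma> by (auto dest: inj_onD)
  moreover have "stretch \<sigma> u v \<le> b"
    using \<sigma>_stretch assms e by blast
  ultimately show "\<sigma> ` e = {Min (\<sigma> ` e), Max (\<sigma> ` e)}" "Min (\<sigma> ` e) < Max (\<sigma> ` e)"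
    "Max (\<sigma> ` e) \<le> Min (\<sigma> ` e) + b"
    unfolding e by (auto simp: min_def max_def)
qed

lemma idx_less: "x \<in> W - {al, be} \<Longrightarrow> idx x < card W - 2"
  using bij_betw_apply[OF idx] by simp

lemma slot_bounds:
  assumes "e \<in> E" "x \<in> W - {al, be}"
  shows "0 < slot e x" "slot e x < scale"
proof -
  define d where "d = Max (\<sigma> ` e) - Min (\<sigma> ` e)"
  have "1 \<le> d" "d \<le> b"
    using edge_layout[OF assms(1)] unfolding d_def by auto
  have "slot e x < 1 + (d - 1) * (card W - 2) + (card W - 2)"
    unfolding slot_def d_def using idx_less[OF assms(2)] by simp
  also have "\<dots> = 1 + d * (card W - 2)"
    using \<open>1 \<le> d\<close> by (cases d) simp_all
  also have "\<dots> \<le> scale"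
    unfolding scale_def using \<open>d \<le> b\<close> by simp
  finally show "slot e x < scale" .
  show "0 < slot e x"
    unfolding slot_def by simp
qed

lemma place_Inl_neq_Inr:
  assumes "e \<in> E" "x \<in> W - {al, be}"
  shows "place (Inl v) \<noteq> place (Inr (e, x))"
  using slot_bounds[OF assms] mult_add_less_eq_iff[of 0 scale "slot e x" "\<sigma> v" "Min (\<sigma> ` e)"]
  unfolding place_def by simp

lemma place_Inr_eq:
  assumes "e \<in> E" "x \<in> W - {al, be}" "e' \<in> E" "x' \<in> W - {al, be}"
    and "place (Inr (e, x)) = place (Inr (e', x'))"
  shows "e = e'" "x = x'"
proof -
  have "Min (\<sigma> ` e) = Min (\<sigma> ` e')" and "slot e x = slot e' x'"
    using assms(5) slot_bounds[OF assms(1,2)] slot_bounds[OF assms(3,4)]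
    unfolding place_def by (simp_all add: mult_add_less_eq_iff)
  moreover from this(2) have
    "Max (\<sigma> ` e) - Min (\<sigma> ` e) - 1 = Max (\<sigma> ` e') - Min (\<sigma> ` e') - 1" "idx x = idx x'"
    unfolding slot_def using idx_less[OF assms(2)] idx_less[OF assms(4)]
    by (simp_all add: mult_add_less_eq_iff)
  moreover have "Min (\<sigma> ` e) < Max (\<sigma> ` e)" "Min (\<sigma> ` e') < Max (\<sigma> ` e')"
    using edge_layout(2) assms(1,3) by blast+
  ultimately have "Max (\<sigma> ` e) = Max (\<sigma> ` e')"
    by linarith
  then have "\<sigma> ` e = \<sigma> ` e'"
    using edge_layout(1) assms(1,3) \<open>Min (\<sigma> ` e) = Min (\<sigma> ` e')\<close> by metis
  then show "e = e'"
    using inj_\<sigma> simple_graph_edge_subset[OF graph] assms(1,3) by (simp add: inj_on_image_eq_iff)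
  show "x = x'"
    using \<open>idx x = idx x'\<close> assms(2,4) bij_betw_imp_inj_on[OF idx] by (auto dest: inj_onD)
qed

lemma inj_on_place: "inj_on place V'"
proof (rule inj_onI)
  fix y z assume "y \<in> V'" "z \<in> V'" and eq: "place y = place z"
  then show "y = z"
  proof (cases rule: replaced_vertexE[case_product replaced_vertexE])
    case Inl_Inl
    then show ?thesis
      using eq inj_\<sigma> scale_pos unfolding place_def by (auto dest: inj_onD)
  next
    case Inl_Inr
    then show ?thesis
      using eq place_Inl_neq_Inr by blast
  next
    case Inr_Inl
    then show ?thesis
      using eq place_Inl_neq_Inr by metis
  next
    case Inr_Inr
    then show ?thesis
      using eq place_Inr_eq by blast
  qed
qed

lemma place_gadget_map_bounds:
  assumes "e \<in> E" "x \<in> W"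
  shows "Min (\<sigma> ` e) * scale \<le> place (gadget_map ori al be e x)"
    "place (gadget_map ori al be e x) \<le> Max (\<sigma> ` e) * scale"
proof -
  have "finite (\<sigma> ` e)"
    using ori[OF assms(1)] by (metis finite.emptyI finite.insertI finite_imageI)
  then have between: "Min (\<sigma> ` e) \<le> \<sigma> v" "\<sigma> v \<le> Max (\<sigma> ` e)" if "v \<in> e" for v
    using that by simp_all
  have "Min (\<sigma> ` e) * scale \<le> place (gadget_map ori al be e x) \<and>
      place (gadget_map ori al be e x) \<le> Max (\<sigma> ` e) * scale"
  proof (cases "x \<in> {al, be}")
    case True
    then obtain v where "v \<in> e" "gadget_map ori al be e x = Inl v"
      using ori[OF assms(1)] unfolding gadget_map_def by (metis insertCI insertE singletonD)
    then show ?thesis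
      unfolding place_def using between by simp
  next
    case False
    then have "slot e x < scale"
      using slot_bounds assms by blast
    then have "Min (\<sigma> ` e) * scale + slot e x \<le> Suc (Min (\<sigma> ` e)) * scale"
      by simp
    also have "\<dots> \<le> Max (\<sigma> ` e) * scale"
      using edge_layout(2)[OF assms(1)] by (intro mult_le_mono1) simp
    finally have "Min (\<sigma> ` e) * scale + slot e x \<le> Max (\<sigma> ` e) * scale" .
    then show ?thesis
      using False unfolding place_def gadget_map_def by auto
  qed
  then show "Min (\<sigma> ` e) * scale \<le> place (gadget_map ori al be e x)"
    "place (gadget_map ori al be e x) \<le> Max (\<sigma> ` e) * scale"
    by simp_all
qed

lemma stretch_place_le:
  assumes "{y, z} \<in> E'"
  shows "stretch place y z \<le> b * scale"
proof -
  obtain e x x' where e: "e \<in> E" and "x \<in> W" "x' \<in> W"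
    and "y = gadget_map ori al be e x" "z = gadget_map ori al be e x'"
    using replaced_edgeE[OF assms] .
  then have "stretch place y z \<le> Max (\<sigma> ` e) * scale - Min (\<sigma> ` e) * scale"
    using place_gadget_map_bounds[OF e] by (intro nat_abs_diff_le_of_between) simp_all
  also have "\<dots> = (Max (\<sigma> ` e) - Min (\<sigma> ` e)) * scale"
    by (simp add: diff_mult_distrib)
  also have "\<dots> \<le> b * scale"
    using edge_layout(3)[OF e] by (intro mult_le_mono1) linarith
  finally show ?thesis .
qed

end

theorem (in edge_replacement) bandwidth_replaced_le:
  "bandwidth V' E' \<le> bandwidth V E * (1 + (card W - 2) * bandwidth V E)"
proof -
  obtain \<sigma> where \<sigma>: "bij_betw \<sigma> V {1..card V}" and \<sigma>_width: "layout_width \<sigma> E = bandwidth V E"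
    using optimal_layout_exists[OF graph] .
  have "inj_on \<sigma> V"
    using bij_betw_imp_inj_on[OF \<sigma>] .
  have "finite W"
    using gadget unfolding simple_graph_def by simp
  moreover have "card (W - {al, be}) = card W - 2"
    using al be al_neq_be by (simp add: card_Diff_subset)
  ultimately obtain idx where "bij_betw idx (W - {al, be}) {0..<card W - 2}"
    using ex_bij_betw_finite_nat[of "W - {al, be}"] by auto
  then interpret replacement_placement V E W F al be ori \<sigma> "bandwidth V E" idx
    using \<open>inj_on \<sigma> V\<close> stretch_le_layout_width[OF graph] \<sigma>_width
    by unfold_locales metis+
  show ?thesis
    using bandwidth_le_of_placement[OF simple_graph_replaced inj_on_place stretch_place_le]
    unfolding scale_def .
qed

theorem mainTheorem16:
  fixes V :: "'a set" and E :: "'a set set"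
    and W :: "'b set" and F :: "'b set set" and al be :: 'b
    and ori :: "'a set \<Rightarrow> 'a \<times> 'a" and b t :: nat
  assumes "simple_graph V E"
    and "bandwidth V E = b"
    and "simple_graph W F"
    and "al \<in> W" and "be \<in> W" and "al \<noteq> be"
    and "card W = t" and "t \<ge> 2"
    and "\<forall>e\<in>E. e = {fst (ori e), snd (ori e)}"
  shows "bandwidth (replaced_vertices V E W al be) (replaced_edges E F al be ori)
           \<le> (b + 1) * (1 + (t - 2) * b)"
proof -
  interpret edge_replacement V E W F al be ori
    using assms by unfold_locales simp_all
  have "bandwidth V' E' \<le> b * (1 + (t - 2) * b)"
    using bandwidth_replaced_le assms(2,7) by simp
  also have "\<dots> \<le> (b + 1) * (1 + (t - 2) * b)"
    by simp
  finally show ?thesis .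
qed

end
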